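(* For every graph $G$ with $m\ge 2$ edges, \[\lambda_1^2+\lambda_2^2\le m+\big(3\,t(G)\big)^{2/3},\] and the inequality is strict if $t(G)>0$.
   Context: $\lambda_1\ge\lambda_2$ denote the two largest eigenvalues of the adjacency matrix of $G$, and $t(G)$ denotes the number of triangles in $G$. *)

theory Defs
  imports "Jordan_Normal_Form.Char_Poly" "HOL-Library.Multiset"
begin

definition simple_graph :: "nat \<Rightarrow> nat set set \<Rightarrow> bool" where
  "simple_graph n E \<longleftrightarrow> (\<forall>e\<in>E. e \<subseteq> {0..<n} \<and> card e = 2)"

definition adj_mat :: "nat \<Rightarrow> nat set set \<Rightarrow> real mat" where
  "adj_mat n E = mat n n (\<lambda>(i,j). if {i,j} \<in> E then 1 else 0)"

text \<open>Eigenvalues of the adjacency matrix, with multiplicity, in non-increasing order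
  (roots of the characteristic polynomial; all real since the matrix is symmetric).\<close>
definition adj_eigs :: "nat \<Rightarrow> nat set set \<Rightarrow> real list" where
  "adj_eigs n E = rev (sorted_list_of_multiset (proots (char_poly (adj_mat n E))))"

definition lambda1 :: "nat \<Rightarrow> nat set set \<Rightarrow> real" where
  "lambda1 n E = adj_eigs n E ! 0"

definition lambda2 :: "nat \<Rightarrow> nat set set \<Rightarrow> real" where
  "lambda2 n E = adj_eigs n E ! 1"

definition triangles :: "nat \<Rightarrow> nat set set \<Rightarrow> nat" where
  "triangles n E = card {T. T \<subseteq> {0..<n} \<and> card T = 3 \<and> (\<forall>x\<in>T. \<forall>y\<in>T. x \<noteq> y \<longrightarrow> {x,y} \<in> E)}"

end

theory Submission
  imports Defs "Jordan_Normal_Form.Schur_Decomposition" "HOL-Analysis.Convex"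
begin

text \<open>Let \<open>\<lambda>\<^sub>1 \<ge> \<dots> \<ge> \<lambda>\<^sub>n\<close> be the eigenvalues of the adjacency matrix. Counting closed walks gives
  \<open>\<Sum> \<lambda>\<^sub>i = 0\<close>, \<open>\<Sum> \<lambda>\<^sub>i\<^sup>2 = 2m\<close>, \<open>\<Sum> \<lambda>\<^sub>i\<^sup>3 = 6t\<close> and \<open>\<Sum> \<lambda>\<^sub>i\<^sup>p \<ge> 0\<close> for odd \<open>p\<close>;
  the last forces \<open>\<lambda>\<^sub>i \<ge> -\<lambda>\<^sub>1\<close> for all \<open>i\<close>. What remains is an inequality about real numbers.
  If \<open>\<lambda>\<^sub>2 \<ge> 0\<close>, write the negative eigenvalues as \<open>-q\<^sub>j\<close> with \<open>0 < q\<^sub>j \<le> \<lambda>\<^sub>1\<close>. Since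
  \<open>\<lambda>\<^sub>1\<^sup>2 + \<lambda>\<^sub>2\<^sup>2 = (\<lambda>\<^sub>1\<^sup>3)\<^bsup>2/3\<^esup> + (\<lambda>\<^sub>2\<^sup>3)\<^bsup>2/3\<^esup>\<close> and \<open>\<Sum> q\<^sub>j\<^sup>3 \<ge> \<lambda>\<^sub>1\<^sup>3 + \<lambda>\<^sub>2\<^sup>3 - 6t\<close>,
  concavity and subadditivity of \<open>s \<mapsto> s\<^bsup>2/3\<^esup>\<close> give
  \<open>\<lambda>\<^sub>1\<^sup>2 + \<lambda>\<^sub>2\<^sup>2 \<le> \<Sum> q\<^sub>j\<^sup>2 + 2 (3t)\<^bsup>2/3\<^esup> \<le> 2m - \<lambda>\<^sub>1\<^sup>2 - \<lambda>\<^sub>2\<^sup>2 + 2 (3t)\<^bsup>2/3\<^esup>\<close>.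
  If \<open>\<lambda>\<^sub>2 < 0\<close>, all eigenvalues but \<open>\<lambda>\<^sub>1\<close> are at most \<open>\<lambda>\<^sub>2\<close>, and an elementary polynomial
  estimate bounds \<open>2(\<lambda>\<^sub>1\<^sup>2 + \<lambda>\<^sub>2\<^sup>2 - m)\<close> in terms of \<open>t\<close> directly.\<close>

section \<open>The concave function \<open>s\<^bsup>2/3\<^esup>\<close>\<close>

definition pow23 :: "real \<Rightarrow> real" where
  "pow23 s = s powr (2/3)"

lemma pow23_concave: "concave_on {0<..} pow23"
  unfolding concave_on_def pow23_def
proof (rule f''_ge0_imp_convex[where f'="\<lambda>x. -(2/3) * x powr (-1/3)" and f''="\<lambda>x. (2/9) * x powr (-4/3)"])
  show "convex {0::real<..}" by simp
  fix x :: real assume x: "x \<in> {0<..}"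
  show "((\<lambda>x. - (x powr (2/3))) has_real_derivative - (2/3) * x powr (- 1/3)) (at x)"
    using x by (auto intro!: derivative_eq_intros simp: powr_diff field_simps)
  show "((\<lambda>x. - (2/3) * x powr (- 1/3)) has_real_derivative 2/9 * x powr (- 4/3)) (at x)"
    using x by (auto intro!: derivative_eq_intros simp: powr_diff field_simps)
  show "0 \<le> 2/9 * x powr (- 4/3)" by simp
qed

lemma pow23_nonneg: "0 \<le> pow23 s"
  by (simp add: pow23_def)

lemma pow23_0 [simp]: "pow23 0 = 0"
  by (simp add: pow23_def)

lemma pow23_pos: "0 < s \<Longrightarrow> 0 < pow23 s"
  by (simp add: pow23_def)

lemma pow23_mono: "0 \<le> a \<Longrightarrow> a \<le> b \<Longrightarrow> pow23 a \<le> pow23 b"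
  by (simp add: pow23_def powr_mono2)

lemma pow23_cube:
  assumes "0 \<le> x"
  shows "pow23 (x^3) = x^2"
proof -
  have "(x^3) powr (2/3) = (x powr 3) powr (2/3)"
    using assms by (simp add: powr_realpow')
  also have "\<dots> = x powr 2"
    by (simp add: powr_powr)
  also have "\<dots> = x^2"
    using assms by (simp add: powr_realpow')
  finally show ?thesis by (simp add: pow23_def)
qed

lemma pow23_subadd_strict:
  assumes "0 < a" "0 < b"
  shows "pow23 (a + b) < pow23 a + pow23 b"
proof -
  have split: "pow23 s = s * s powr (-1/3)" if "0 < s" for s
    using that by (simp add: pow23_def powr_add[symmetric] powr_mult_base)
  have "(a + b) powr (-1/3) < a powr (-1/3)" "(a + b) powr (-1/3) < b powr (-1/3)"
    using assms by (auto intro: powr_less_mono2_neg)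
  then have "a * (a + b) powr (-1/3) + b * (a + b) powr (-1/3) < a * a powr (-1/3) + b * b powr (-1/3)"
    using assms by (intro add_strict_mono mult_strict_left_mono) auto
  then show ?thesis
    using assms by (simp add: split distrib_right[symmetric])
qed

lemma pow23_subadd: "0 \<le> a \<Longrightarrow> 0 \<le> b \<Longrightarrow> pow23 (a + b) \<le> pow23 a + pow23 b"
  using pow23_subadd_strict[of a b] by (cases "a = 0"; cases "b = 0") (auto simp: pow23_nonneg)

lemma pow23_double_strict: "0 < s \<Longrightarrow> pow23 s < 2 * pow23 (s/2)"
  using pow23_subadd_strict[of "s/2" "s/2"] by simp

lemma pow23_double: "0 \<le> s \<Longrightarrow> pow23 s \<le> 2 * pow23 (s/2)"
  using pow23_subadd[of "s/2" "s/2"] by simp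

lemma pow23_spread_le:
  assumes "0 \<le> c" "c \<le> a" "a \<le> d" "c \<le> b" "b \<le> d" "a + b = c + d"
  shows "pow23 c + pow23 d \<le> pow23 a + pow23 b"
proof -
  consider "c = 0" | "c = d" | "0 < c" "c < d"
    using assms by linarith
  then show ?thesis
  proof cases
    case 1
    then show ?thesis using pow23_subadd[of a b] assms by simp
  next
    case 2
    then show ?thesis using assms by (simp add: antisym)
  next
    case 3
    define \<theta> where "\<theta> = (a - c) / (d - c)"
    have \<theta>: "0 \<le> \<theta>" "\<theta> \<le> 1" "\<theta> * (d - c) = a - c"
      using assms 3 by (auto simp: \<theta>_def field_simps)
    have a: "a = (1 - \<theta>) *\<^sub>R c + \<theta> *\<^sub>R d" and b: "b = (1 - (1 - \<theta>)) *\<^sub>R c + (1 - \<theta>) *\<^sub>R d"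
      using \<theta>(3) assms(6) by (simp_all add: algebra_simps)
    have "(1 - \<theta>) * pow23 c + \<theta> * pow23 d \<le> pow23 a"
      unfolding a by (rule concave_onD[OF pow23_concave]) (use \<theta> 3 in auto)
    moreover have "(1 - (1 - \<theta>)) * pow23 c + (1 - \<theta>) * pow23 d \<le> pow23 b"
      unfolding b by (rule concave_onD[OF pow23_concave]) (use \<theta> 3 in auto)
    ultimately show ?thesis by (simp add: algebra_simps)
  qed
qed

lemma pow23_midpoint: "0 \<le> a \<Longrightarrow> 0 \<le> b \<Longrightarrow> pow23 a + pow23 b \<le> 2 * pow23 ((a + b)/2)"
  using pow23_spread_le[of "min a b" "(a + b)/2" "max a b" "(a + b)/2"]
  by (cases "a \<le> b") (auto simp: min_def max_def add.commute)

text \<open>Lower bound for \<open>\<Sum> pow23 u\<^sub>i\<close> over \<open>0 \<le> u\<^sub>i \<le> X\<close> with \<open>\<Sum> u\<^sub>i = s\<close>: by concavity the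
  extremal configuration fills blocks of size \<open>X\<close>. Only the first two blocks are needed below.\<close>
definition block_pow23 :: "real \<Rightarrow> real \<Rightarrow> real" where
  "block_pow23 X s =
    (if s \<le> X then pow23 s else if s \<le> 2 * X then pow23 X + pow23 (s - X) else 2 * pow23 X)"

lemma block_pow23_mono:
  assumes "0 \<le> X" "0 \<le> s" "s \<le> s'"
  shows "block_pow23 X s \<le> block_pow23 X s'"
proof -
  have "pow23 (s - X) \<le> pow23 X" if "X \<le> s" "s \<le> 2 * X" for s
    using that pow23_mono[of "s - X" X] by auto
  then show ?thesis
    using assms pow23_mono[of s s'] pow23_mono[of s X] pow23_mono[of "s - X" "s' - X"]
      pow23_nonneg[of "s' - X"] pow23_nonneg[of X]
    unfolding block_pow23_def by (auto split: if_splits)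
qed

lemma block_pow23_nonneg: "0 \<le> X \<Longrightarrow> 0 \<le> s \<Longrightarrow> 0 \<le> block_pow23 X s"
  using block_pow23_mono[of X 0 s] by (simp add: block_pow23_def)

lemma block_pow23_pos: "0 < X \<Longrightarrow> 0 < s \<Longrightarrow> 0 < block_pow23 X s"
  unfolding block_pow23_def using pow23_pos[of s] pow23_pos[of X] pow23_nonneg[of "s - X"] by auto

lemma block_pow23_add_le:
  assumes "0 \<le> X" "0 \<le> s" "0 \<le> u" "u \<le> X"
  shows "block_pow23 X (s + u) \<le> block_pow23 X s + pow23 u"
proof -
  consider "s + u \<le> X" | "s \<le> X" "X < s + u" | "X < s" "s + u \<le> 2 * X"
    | "X < s" "s \<le> 2 * X" "2 * X < s + u" | "2 * X < s"
    using assms by linarith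
  then show ?thesis
  proof cases
    case 1
    then show ?thesis using pow23_subadd[of s u] assms by (simp add: block_pow23_def)
  next
    case 2
    have "pow23 (s + u - X) + pow23 X \<le> pow23 s + pow23 u"
      using 2 assms by (intro pow23_spread_le) auto
    then show ?thesis using 2 assms by (simp add: block_pow23_def)
  next
    case 3
    have "pow23 (s - X + u) \<le> pow23 (s - X) + pow23 u"
      using 3 assms by (intro pow23_subadd) auto
    then show ?thesis using 3 assms by (simp add: block_pow23_def algebra_simps)
  next
    case 4
    have "pow23 X \<le> pow23 (s - X + u)" "pow23 (s - X + u) \<le> pow23 (s - X) + pow23 u"
      using 4 assms by (auto intro: pow23_mono pow23_subadd)
    then show ?thesis using 4 assms by (simp add: block_pow23_def algebra_simps)
  next
    case 5
    then show ?thesis using assms pow23_nonneg[of u] by (simp add: block_pow23_def)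
  qed
qed

lemma block_pow23_cubes_le_squares:
  assumes "0 \<le> x" and qs: "\<forall>q\<in>set qs. 0 \<le> q \<and> q \<le> x"
  shows "block_pow23 (x^3) (sum_list (map (\<lambda>q. q^3) qs)) \<le> sum_list (map (\<lambda>q. q^2) qs)"
  using qs
proof (induction qs)
  case Nil
  then show ?case using assms(1) by (simp add: block_pow23_def)
next
  case (Cons q qs)
  have q: "0 \<le> q" "q \<le> x" and s: "0 \<le> sum_list (map (\<lambda>q. q^3) qs)"
    using Cons.prems by (auto intro!: sum_list_nonneg)
  have "block_pow23 (x^3) (sum_list (map (\<lambda>q. q^3) qs) + q^3)
      \<le> block_pow23 (x^3) (sum_list (map (\<lambda>q. q^3) qs)) + pow23 (q^3)"
    using assms q s by (intro block_pow23_add_le) (auto intro: power_mono)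
  then show ?case
    using Cons pow23_cube[OF q(1)] by (simp add: add.commute)
qed

text \<open>The core estimate: \<open>X, Y\<close> stand for the cubes of the two largest eigenvalues, \<open>U\<close> and
  \<open>Q\<close> for the sums of cubes and squares of the absolute values of the negative ones, and \<open>T\<close>
  for the sum of all cubes.\<close>
lemma pow23_pair_le:
  assumes XY: "0 \<le> Y" "Y \<le> X" "0 < X" and UT: "0 \<le> U" "0 \<le> T" "X + Y \<le> U + T"
    and Q: "block_pow23 X U \<le> Q"
  shows "pow23 X + pow23 Y \<le> Q + 2 * pow23 (T/2)"
    and "0 < T \<Longrightarrow> 0 < U \<Longrightarrow> pow23 X + pow23 Y < Q + 2 * pow23 (T/2)"
proof -
  consider "X + Y \<le> T" | "Y \<le> T" "T < X + Y" | "T < Y"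
    by linarith
  then have "pow23 X + pow23 Y \<le> Q + 2 * pow23 (T/2)
    \<and> (0 < T \<longrightarrow> 0 < U \<longrightarrow> pow23 X + pow23 Y < Q + 2 * pow23 (T/2))"
  proof cases
    case 1
    have "pow23 X + pow23 Y \<le> 2 * pow23 ((X + Y)/2)"
      using XY by (intro pow23_midpoint) auto
    also have "\<dots> \<le> 2 * pow23 (T/2)"
      using 1 XY by (auto intro: pow23_mono)
    finally show ?thesis
      using Q block_pow23_nonneg[of X U] block_pow23_pos[of X U] XY UT by fastforce
  next
    case 2
    define s where "s = T - Y"
    have s: "0 \<le> s" "s < X"
      using 2 by (auto simp: s_def)
    have "block_pow23 X (X - s) \<le> block_pow23 X U"
      using 2 UT XY by (intro block_pow23_mono) (auto simp: s_def)
    then have Qs: "pow23 (X - s) \<le> Q"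
      using Q s by (simp add: block_pow23_def)
    have mid: "pow23 Y + pow23 s \<le> 2 * pow23 (T/2)"
      using pow23_midpoint[of Y s] s XY by (simp add: s_def)
    show ?thesis
    proof (cases "s = 0")
      case True
      then show ?thesis
        using Qs mid pow23_double_strict[of Y] by (auto simp: s_def)
    next
      case False
      then show ?thesis
        using Qs mid pow23_subadd_strict[of "X - s" s] s by auto
    qed
  next
    case 3
    have "block_pow23 X (X + (Y - T)) \<le> block_pow23 X U"
      using 3 UT XY by (intro block_pow23_mono) auto
    then have "pow23 X + pow23 (Y - T) \<le> Q"
      using Q 3 XY UT by (simp add: block_pow23_def)
    then show ?thesis
      using pow23_subadd[of "Y - T" T] pow23_double[of T] pow23_double_strict[of T] 3 UT
      by fastforce
  qed
  then show "pow23 X + pow23 Y \<le> Q + 2 * pow23 (T/2)"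
    and "0 < T \<Longrightarrow> 0 < U \<Longrightarrow> pow23 X + pow23 Y < Q + 2 * pow23 (T/2)"
    by auto
qed

section \<open>Real numbers with nonnegative odd power sums\<close>

text \<open>A value \<open>l\<^sub>0 < -x\<close> would dominate the odd power sums \<open>\<Sum> l\<^sup>p\<close> for large odd \<open>p\<close>.\<close>
lemma odd_power_sums_nonneg_imp_ge:
  fixes L :: "real list"
  assumes le: "\<forall>l\<in>set L. l \<le> x" and "0 \<le> x"
    and odd: "\<And>p. odd p \<Longrightarrow> 0 \<le> sum_list (map (\<lambda>l. l^p) L)" and "l\<^sub>0 \<in> set L"
  shows "- x \<le> l\<^sub>0"
proof (rule ccontr)
  assume "\<not> - x \<le> l\<^sub>0"
  define M where "M = - l\<^sub>0"
  have M: "x < M" "0 < M"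
    using \<open>\<not> - x \<le> l\<^sub>0\<close> \<open>0 \<le> x\<close> by (auto simp: M_def)
  define N where "N = length L"
  define r where "r = x / M"
  have r: "0 \<le> r" "r < 1"
    using M \<open>0 \<le> x\<close> by (auto simp: r_def)
  obtain k where k: "r ^ k < 1 / (real N + 1)"
    using real_arch_pow_inv[of "1 / (real N + 1)" r] r by auto
  define p where "p = 2 * k + 1"
  have "odd p" by (simp add: p_def)
  have "sum_list (map (\<lambda>l. l^p) L) = l\<^sub>0 ^ p + sum_list (map (\<lambda>l. l^p) (remove1 l\<^sub>0 L))"
    using \<open>l\<^sub>0 \<in> set L\<close> by (rule sum_list_map_remove1)
  also have "sum_list (map (\<lambda>l. l^p) (remove1 l\<^sub>0 L)) \<le> sum_list (map (\<lambda>l. x^p) (remove1 l\<^sub>0 L))"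
  proof (rule sum_list_mono)
    fix l assume "l \<in> set (remove1 l\<^sub>0 L)"
    then have "l \<le> x"
      using le set_remove1_subset by fast
    then show "l^p \<le> x^p"
      using \<open>odd p\<close> power_mono_odd by blast
  qed
  also have "\<dots> \<le> real N * x^p"
    using \<open>0 \<le> x\<close> by (auto simp: sum_list_triv N_def length_remove1 intro!: mult_right_mono)
  also have "real N * x^p = real N * r^p * M^p"
    using M by (simp add: r_def power_divide)
  also have "\<dots> \<le> real N * r^k * M^p"
    using r M by (intro mult_right_mono mult_left_mono power_decreasing) (auto simp: p_def)
  also have "\<dots> < M^p"
  proof -
    have "real N * r^k < 1"
      using k r by (simp add: field_simps) (smt (verit) zero_le_power)
    then show ?thesis
      using M by simp
  qed
  finally show False
    using odd[OF \<open>odd p\<close>] \<open>odd p\<close> by (simp add: M_def)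
qed

text \<open>\<open>141/100\<close> is a rational just below \<open>\<surd>2\<close>; this is what turns the estimate into
  \<open>D\<^sup>3 \<le> (D x)\<^sup>2 < 2 T\<^sup>2\<close>.\<close>
lemma neg_second_polynomial_estimate:
  fixes x z D T :: real
  assumes z: "0 < z" "2 * z \<le> x" and D: "0 < D" "D \<le> x^2 - x*z + 2*z^2"
    and T: "z * (x^2 - 2*x*z + 2*z^2) + (x - z) * D \<le> T"
  shows "100 * (D * x) \<le> 141 * T"
proof -
  have "0 \<le> z * ((x - z)^2 + z^2)"
    using z by simp
  then have nn: "0 \<le> z * (x^2 - 2*x*z + 2*z^2)"
    by (simp add: power2_eq_square algebra_simps)
  consider "141 * z \<le> 41 * x" | "41 * x < 141 * z"
    by linarith
  then show ?thesis
  proof cases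
    case 1
    have "D * (100 * x - 141 * (x - z)) \<le> 0"
      using 1 D by (intro mult_nonneg_nonpos) auto
    then show ?thesis using T nn by (simp add: algebra_simps)
  next
    case 2
    obtain d where d: "x = 2*z + d" "0 \<le> d"
      using z by (metis add.commute diff_add_cancel diff_ge_0_iff_ge)
    have "D * (141 * z - 41 * x) \<le> (x^2 - x*z + 2*z^2) * (141 * z - 41 * x)"
      using 2 D by (intro mult_right_mono) auto
    moreover have "0 \<le> x * (23*z^2 + 123*z*d + 41*d^2)"
      using d z by (intro mult_nonneg_nonneg) auto
    then have "(x^2 - x*z + 2*z^2) * (141 * z - 41 * x) \<le> 141 * (z * (x^2 - 2*x*z + 2*z^2))"
      unfolding d(1) by (simp add: algebra_simps power2_eq_square power3_eq_cube)
    ultimately show ?thesis using T by (simp add: algebra_simps)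
  qed
qed

lemma less_twice_pow23_half:
  fixes D T :: real
  assumes "0 < D" "0 \<le> T" "D^3 < 2 * T^2"
  shows "D < 2 * pow23 (T/2)"
proof -
  have "0 < T"
    using assms by (cases "T = 0") auto
  have cubes: "(D/2) powr 3 = (D/2)^3" and squares: "(T/2) powr 2 = (T/2)^2"
    using assms \<open>0 < T\<close> by (simp_all add: powr_realpow)
  have "(D/2)^3 < (T/2)^2"
    using assms by (simp add: power_divide)
  then have "((D/2) powr 3) powr (1/3) < ((T/2) powr 2) powr (1/3)"
    unfolding cubes squares using assms by (intro powr_less_mono2) auto
  moreover have "((D/2) powr 3) powr (1/3) = D/2"
    using assms by (subst powr_powr) simp
  moreover have "((T/2) powr 2) powr (1/3) = pow23 (T/2)"
    unfolding pow23_def by (subst powr_powr) simp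
  ultimately show ?thesis
    by simp
qed

lemma sum_list_map_filter_split:
  "sum_list (map f xs) = sum_list (map f (filter P xs)) + sum_list (map f (filter (\<lambda>x. \<not> P x) xs))"
  for f :: "'a \<Rightarrow> 'b::comm_monoid_add"
  by (induction xs) (auto simp: ac_simps)

lemma top_two_squares_bound_nonneg_second:
  fixes x y T :: real and R :: "real list"
  assumes xy: "0 < x" "0 \<le> y" "y \<le> x" and R: "\<forall>l\<in>set R. - x \<le> l"
    and sum: "x + y + sum_list R = 0"
    and cubes: "x^3 + y^3 + sum_list (map (\<lambda>l. l^3) R) = T" and "0 \<le> T"
  shows "x^2 + y^2 \<le> sum_list (map (\<lambda>l. l^2) R) + 2 * pow23 (T/2)"
    and "0 < T \<Longrightarrow> x^2 + y^2 < sum_list (map (\<lambda>l. l^2) R) + 2 * pow23 (T/2)"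
proof -
  define ps where "ps = filter (\<lambda>l. \<not> l < 0) R"
  define qs where "qs = map uminus (filter (\<lambda>l. l < 0) R)"
  define Q where "Q = sum_list (map (\<lambda>q. q^2) qs)"
  define U where "U = sum_list (map (\<lambda>q. q^3) qs)"
  have qs: "\<forall>q\<in>set qs. 0 < q \<and> q \<le> x"
    using R by (auto simp: qs_def)
  have squares: "sum_list (map (\<lambda>l. l^2) R) = sum_list (map (\<lambda>l. l^2) ps) + Q"
    using sum_list_map_filter_split[of "\<lambda>l. l^2" R "\<lambda>l. l < 0"]
    by (simp add: ps_def Q_def qs_def o_def add.commute)
  have "sum_list (map (\<lambda>l. l^3) R) = sum_list (map (\<lambda>l. l^3) ps) - U"
    using sum_list_map_filter_split[of "\<lambda>l. l^3" R "\<lambda>l. l < 0"]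
    by (simp add: ps_def U_def qs_def o_def uminus_sum_list_map)
  moreover have "0 \<le> sum_list (map (\<lambda>l. l^3) ps)"
    by (auto simp: ps_def intro!: sum_list_nonneg)
  ultimately have UT: "x^3 + y^3 \<le> U + T"
    using cubes by simp
  have "qs \<noteq> []"
  proof
    assume "qs = []"
    then have "0 \<le> sum_list R"
      by (auto simp: qs_def filter_empty_conv intro!: sum_list_nonneg)
    then show False
      using sum xy by simp
  qed
  then obtain q where "q \<in> set qs"
    by (cases qs) auto
  then have "q^3 \<le> U"
    using qs unfolding U_def by (intro member_le_sum_list) auto
  then have "0 < U"
    using qs \<open>q \<in> set qs\<close> by (smt (verit) zero_less_power)
  have "\<forall>q\<in>set qs. 0 \<le> q \<and> q \<le> x"
    using qs by auto
  then have block: "block_pow23 (x^3) U \<le> Q"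
    unfolding U_def Q_def using xy by (intro block_pow23_cubes_le_squares) auto
  have "0 \<le> sum_list (map (\<lambda>l. l^2) ps)"
    by (intro sum_list_nonneg) auto
  moreover have "x^3 \<ge> y^3"
    using xy by (intro power_mono) auto
  ultimately show "x^2 + y^2 \<le> sum_list (map (\<lambda>l. l^2) R) + 2 * pow23 (T/2)"
    and "0 < T \<Longrightarrow> x^2 + y^2 < sum_list (map (\<lambda>l. l^2) R) + 2 * pow23 (T/2)"
    using pow23_pair_le[of "y^3" "x^3" U T Q] block UT \<open>0 < U\<close> \<open>0 \<le> T\<close> xy
    by (auto simp: pow23_cube squares)
qed

lemma neg_second_excess_bound:
  fixes x z S Q C T :: real
  assumes "0 < z" "z \<le> S" "x = z + S" "z * S \<le> Q" "C \<le> S * Q"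
    and cubes: "x^3 - z^3 - C = T" and "0 \<le> T" and pos: "0 < x^2 + z^2 - Q"
  shows "x^2 + z^2 - Q < 2 * pow23 (T/2)"
proof -
  define D where "D = x^2 + z^2 - Q"
  have "0 < x" "2 * z \<le> x" and Dle: "D \<le> x^2 - x*z + 2*z^2"
    using assms by (simp_all add: D_def algebra_simps power2_eq_square)
  have "2 * z * z^2 \<le> x * z^2"
    using \<open>2 * z \<le> x\<close> by (intro mult_right_mono) auto
  moreover have "C \<le> (x - z) * Q"
    using assms by simp
  ultimately have "z * (x^2 - 2*x*z + 2*z^2) + (x - z) * D \<le> T"
    using cubes by (simp add: D_def algebra_simps power2_eq_square power3_eq_cube)
  then have DT: "100 * (D * x) \<le> 141 * T"
    using neg_second_polynomial_estimate \<open>0 < z\<close> \<open>2 * z \<le> x\<close> pos Dle by (simp add: D_def)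
  have "2 * z * z \<le> x * z"
    using \<open>0 < z\<close> \<open>2 * z \<le> x\<close> by (intro mult_right_mono) auto
  then have "D \<le> x^2"
    using Dle by (simp add: power2_eq_square)
  then have "D^3 \<le> (D * x)^2"
    using pos by (simp add: D_def power2_eq_square power3_eq_cube power_mult_distrib)
  also have "\<dots> \<le> (141/100 * T)^2"
    using DT pos \<open>0 < x\<close> by (intro power_mono) (auto simp: D_def)
  also have "\<dots> < 2 * T^2"
    using DT mult_pos_pos[OF pos \<open>0 < x\<close>] by (simp add: D_def power_mult_distrib power_divide)
  finally show ?thesis
    using pos \<open>0 \<le> T\<close> unfolding D_def by (intro less_twice_pow23_half)
qed

lemma top_two_squares_bound_neg_second:
  fixes x y T :: real and R :: "real list"
  assumes "y < 0" and R: "R \<noteq> []" "\<forall>l\<in>set R. l \<le> y"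
    and sum: "x + y + sum_list R = 0"
    and cubes: "x^3 + y^3 + sum_list (map (\<lambda>l. l^3) R) = T" and "0 \<le> T"
  shows "x^2 + y^2 \<le> sum_list (map (\<lambda>l. l^2) R) + 2 * pow23 (T/2)"
    and "0 < T \<Longrightarrow> x^2 + y^2 < sum_list (map (\<lambda>l. l^2) R) + 2 * pow23 (T/2)"
proof -
  define z where "z = - y"
  define ws where "ws = map uminus R"
  define S where "S = sum_list ws"
  define Q where "Q = sum_list (map (\<lambda>w. w^2) ws)"
  have "0 < z"
    using \<open>y < 0\<close> by (simp add: z_def)
  have ws: "\<forall>w\<in>set ws. z \<le> w \<and> w \<le> S"
    using R \<open>0 < z\<close> by (fastforce simp: ws_def z_def S_def intro: member_le_sum_list)
  then have "z \<le> S"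
    using R by (cases R) (auto simp: ws_def)
  have "x = z + S"
    using sum uminus_sum_list_map[of "\<lambda>l. l" R] by (simp add: S_def ws_def z_def o_def)
  have "z * S \<le> Q"
  proof -
    have "sum_list (map (\<lambda>w. z * w) ws) \<le> Q"
      unfolding Q_def using ws \<open>0 < z\<close>
      by (intro sum_list_mono) (auto simp: power2_eq_square intro: mult_right_mono)
    then show ?thesis
      by (simp add: S_def sum_list_const_mult)
  qed
  have "sum_list (map (\<lambda>w. w^3) ws) \<le> S * Q"
  proof -
    have "sum_list (map (\<lambda>w. w^3) ws) \<le> sum_list (map (\<lambda>w. S * w^2) ws)"
      using ws \<open>0 < z\<close>
      by (intro sum_list_mono) (auto simp: power3_eq_cube power2_eq_square intro: mult_right_mono)
    then show ?thesis
      by (simp add: Q_def sum_list_const_mult)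
  qed
  moreover have "x^3 - z^3 - sum_list (map (\<lambda>w. w^3) ws) = T"
    using cubes uminus_sum_list_map[of "\<lambda>l. l^3" R] by (simp add: z_def ws_def o_def)
  moreover have "x^2 + y^2 - sum_list (map (\<lambda>l. l^2) R) = x^2 + z^2 - Q"
    by (simp add: Q_def ws_def z_def o_def)
  ultimately have "0 < x^2 + y^2 - sum_list (map (\<lambda>l. l^2) R) \<Longrightarrow>
      x^2 + y^2 - sum_list (map (\<lambda>l. l^2) R) < 2 * pow23 (T/2)"
    using neg_second_excess_bound \<open>0 < z\<close> \<open>z \<le> S\<close> \<open>x = z + S\<close> \<open>z * S \<le> Q\<close> \<open>0 \<le> T\<close> by metis
  then show "x^2 + y^2 \<le> sum_list (map (\<lambda>l. l^2) R) + 2 * pow23 (T/2)"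
    and "0 < T \<Longrightarrow> x^2 + y^2 < sum_list (map (\<lambda>l. l^2) R) + 2 * pow23 (T/2)"
    using pow23_nonneg[of "T/2"] pow23_pos[of "T/2"] by fastforce+
qed

lemma sorted_top_two_squares_bound:
  fixes L :: "real list"
  assumes sorted: "sorted_wrt (\<ge>) L" and "3 \<le> length L" and sum: "sum_list L = 0"
    and squares: "0 < sum_list (map (\<lambda>l. l^2) L)"
    and odd: "\<And>p. odd p \<Longrightarrow> 0 \<le> sum_list (map (\<lambda>l. l^p) L)"
  defines "T \<equiv> sum_list (map (\<lambda>l. l^3) L)"
  shows "2 * (L!0^2 + L!1^2) \<le> sum_list (map (\<lambda>l. l^2) L) + 2 * pow23 (T/2)"
    and "0 < T \<Longrightarrow> 2 * (L!0^2 + L!1^2) < sum_list (map (\<lambda>l. l^2) L) + 2 * pow23 (T/2)"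
proof -
  obtain x y R where L: "L = x # y # R" and "R \<noteq> []"
    using \<open>3 \<le> length L\<close> by (cases L; cases "tl L"; cases "tl (tl L)") auto
  have le_x: "\<forall>l\<in>set L. l \<le> x" and le_y: "\<forall>l\<in>set R. l \<le> y" and "y \<le> x"
    using sorted by (auto simp: L)
  have "0 < x"
  proof (rule ccontr)
    assume "\<not> 0 < x"
    then have "\<forall>l\<in>set L. l \<le> 0"
      using le_x by auto
    moreover have "sum_list (map uminus L) = 0"
      using sum uminus_sum_list_map[of "\<lambda>l. l" L] by (simp add: o_def)
    ultimately have "\<forall>l\<in>set L. l = 0"
      using sum_list_nonneg_eq_0_iff[of "map uminus L"] by force
    then have "sum_list (map (\<lambda>l. l^2) L) = 0"
      by (subst sum_list_nonneg_eq_0_iff) auto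
    then show False
      using squares by simp
  qed
  have ge: "\<forall>l\<in>set R. - x \<le> l"
    using odd_power_sums_nonneg_imp_ge[OF le_x _ odd] \<open>0 < x\<close> by (auto simp: L)
  have "0 \<le> T"
    using odd[of 3] by (simp add: T_def)
  have "x + y + sum_list R = 0" "x^3 + y^3 + sum_list (map (\<lambda>l. l^3) R) = T"
    using sum by (simp_all add: L T_def)
  then have "x^2 + y^2 \<le> sum_list (map (\<lambda>l. l^2) R) + 2 * pow23 (T/2)
    \<and> (0 < T \<longrightarrow> x^2 + y^2 < sum_list (map (\<lambda>l. l^2) R) + 2 * pow23 (T/2))"
    using top_two_squares_bound_nonneg_second[of x y R T] top_two_squares_bound_neg_second[where x=x and y=y and R=R and T=T]
      \<open>0 < x\<close> \<open>y \<le> x\<close> ge le_y \<open>R \<noteq> []\<close> \<open>0 \<le> T\<close>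
    by (cases "0 \<le> y") auto
  then show "2 * (L!0^2 + L!1^2) \<le> sum_list (map (\<lambda>l. l^2) L) + 2 * pow23 (T/2)"
    and "0 < T \<Longrightarrow> 2 * (L!0^2 + L!1^2) < sum_list (map (\<lambda>l. l^2) L) + 2 * pow23 (T/2)"
    by (auto simp: L)
qed

section \<open>Power sums of the spectrum of a real symmetric matrix\<close>

definition trace_mat :: "'a::comm_ring_1 mat \<Rightarrow> 'a" where
  "trace_mat A = (\<Sum>i\<in>{0..<dim_row A}. A $$ (i,i))"

lemma index_mult_mat_sum:
  assumes "A \<in> carrier_mat n m" "B \<in> carrier_mat m k" "i < n" "j < k"
  shows "(A * B) $$ (i,j) = (\<Sum>l\<in>{0..<m}. A $$ (i,l) * B $$ (l,j))"
  using assms by (simp add: scalar_prod_def)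

lemma trace_mat_mult_comm:
  fixes A B :: "'a::comm_ring_1 mat"
  assumes A: "A \<in> carrier_mat n m" and B: "B \<in> carrier_mat m n"
  shows "trace_mat (A * B) = trace_mat (B * A)"
proof -
  have "trace_mat (A * B) = (\<Sum>i\<in>{0..<n}. \<Sum>l\<in>{0..<m}. A $$ (i,l) * B $$ (l,i))"
    unfolding trace_mat_def using A B by (intro sum.cong) (auto simp: scalar_prod_def)
  also have "\<dots> = (\<Sum>l\<in>{0..<m}. \<Sum>i\<in>{0..<n}. B $$ (l,i) * A $$ (i,l))"
    by (subst sum.swap) (simp add: mult.commute)
  also have "\<dots> = trace_mat (B * A)"
    unfolding trace_mat_def using A B by (intro sum.cong) (auto simp: scalar_prod_def)
  finally show ?thesis .
qed

lemma trace_mat_pow_similar: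
  assumes sim: "similar_mat_wit A B P Q" and A: "A \<in> carrier_mat n n"
  shows "trace_mat (A ^\<^sub>m k) = trace_mat (B ^\<^sub>m k)"
proof -
  obtain QP: "Q * P = 1\<^sub>m n" and B: "B \<in> carrier_mat n n"
    and P: "P \<in> carrier_mat n n" and Q: "Q \<in> carrier_mat n n"
    using similar_mat_witD2[OF A sim] by auto
  have Bk: "B ^\<^sub>m k \<in> carrier_mat n n"
    using B by simp
  have "trace_mat (A ^\<^sub>m k) = trace_mat (P * (B ^\<^sub>m k * Q))"
    using similar_mat_wit_pow_id[OF sim] P Bk Q by (simp add: assoc_mult_mat)
  also have "\<dots> = trace_mat ((B ^\<^sub>m k * Q) * P)"
    using P Bk Q by (intro trace_mat_mult_comm[of _ n n]) auto
  also have "\<dots> = trace_mat (B ^\<^sub>m k)"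
    using P Bk Q QP by (simp add: assoc_mult_mat right_mult_one_mat[OF Bk])
  finally show ?thesis .
qed

lemma upper_triangular_pow:
  fixes B :: "'a::comm_ring_1 mat"
  assumes B: "B \<in> carrier_mat n n" and ut: "upper_triangular B"
  shows "upper_triangular (B ^\<^sub>m k) \<and> (\<forall>i<n. (B ^\<^sub>m k) $$ (i,i) = (B $$ (i,i)) ^ k)"
proof (induction k)
  case 0
  then show ?case using B by auto
next
  case (Suc k)
  let ?C = "B ^\<^sub>m k"
  have C: "?C \<in> carrier_mat n n"
    using B by simp
  have vanish: "?C $$ (i,l) * B $$ (l,j) = 0" if "i < n" "l < n" "j < i \<or> j = i \<and> l \<noteq> i" for i j l
    using Suc.IH ut that C B by (cases "l < i") (auto simp: upper_triangularD)
  have "upper_triangular (?C * B)"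
  proof (rule upper_triangularI)
    fix i j assume ij: "j < i" "i < dim_row (?C * B)"
    then have "(?C * B) $$ (i,j) = (\<Sum>l\<in>{0..<n}. ?C $$ (i,l) * B $$ (l,j))"
      using C B by (intro index_mult_mat_sum[OF C B]) auto
    also have "\<dots> = 0"
      using ij C vanish by (intro sum.neutral) auto
    finally show "(?C * B) $$ (i,j) = 0" .
  qed
  moreover have "(?C * B) $$ (i,i) = (B $$ (i,i)) ^ Suc k" if "i < n" for i
  proof -
    have "(?C * B) $$ (i,i) = (\<Sum>l\<in>{i}. ?C $$ (i,l) * B $$ (l,i))"
      unfolding index_mult_mat_sum[OF C B that that]
      using that vanish by (intro sum.mono_neutral_right) auto
    then show ?thesis
      using Suc.IH that by (simp add: mult.commute)
  qed
  ultimately show ?case by simp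
qed

lemma trace_mat_upper_triangular_pow:
  fixes B :: "'a::comm_ring_1 mat"
  assumes B: "B \<in> carrier_mat n n" and ut: "upper_triangular B"
  shows "trace_mat (B ^\<^sub>m k) = sum_list (map (\<lambda>a. a ^ k) (diag_mat B))"
proof -
  have "trace_mat (B ^\<^sub>m k) = (\<Sum>i\<in>{0..<n}. (B $$ (i,i)) ^ k)"
    unfolding trace_mat_def using upper_triangular_pow[OF B ut, of k] B by simp
  also have "\<dots> = sum_list (map (\<lambda>i. (B $$ (i,i)) ^ k) [0..<n])"
    by (simp add: sum_list_distinct_conv_sum_set)
  finally show ?thesis
    using B by (simp add: diag_mat_def o_def)
qed

lemma quadratic_form_real_symmetric_real:
  fixes A :: "real mat" and v :: "complex vec"
  assumes sym: "\<And>i j. i < n \<Longrightarrow> j < n \<Longrightarrow> A $$ (i,j) = A $$ (j,i)"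
  defines "s \<equiv> \<Sum>i\<in>{0..<n}. cnj (v $ i) * (\<Sum>j\<in>{0..<n}. complex_of_real (A $$ (i,j)) * v $ j)"
  shows "cnj s = s"
proof -
  have "cnj s = (\<Sum>i\<in>{0..<n}. \<Sum>j\<in>{0..<n}. v $ i * complex_of_real (A $$ (i,j)) * cnj (v $ j))"
    unfolding s_def by (simp add: cnj_sum sum_distrib_left mult.assoc)
  also have "\<dots> = (\<Sum>j\<in>{0..<n}. \<Sum>i\<in>{0..<n}. v $ i * complex_of_real (A $$ (i,j)) * cnj (v $ j))"
    by (rule sum.swap)
  also have "\<dots> = s"
    unfolding s_def by (auto simp: sum_distrib_left sym algebra_simps intro!: sum.cong)
  finally show ?thesis .
qed

lemma real_symmetric_eigenvalue_real:
  fixes A :: "real mat"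
  assumes A: "A \<in> carrier_mat n n" and sym: "\<And>i j. i < n \<Longrightarrow> j < n \<Longrightarrow> A $$ (i,j) = A $$ (j,i)"
    and "eigenvalue (map_mat complex_of_real A) a"
  shows "Im a = 0"
proof -
  obtain v where v: "v \<in> carrier_vec n" "v \<noteq> 0\<^sub>v n" "map_mat complex_of_real A *\<^sub>v v = a \<cdot>\<^sub>v v"
    using assms unfolding eigenvalue_def eigenvector_def by auto
  define N where "N = (\<Sum>i\<in>{0..<n}. (cmod (v $ i))^2)"
  have "0 < N"
  proof -
    obtain i where "i < n" "v $ i \<noteq> 0"
      using v(1,2) by (metis carrier_vecD eq_vecI index_zero_vec)
    then have "0 < (cmod (v $ i))^2" "(cmod (v $ i))^2 \<le> N"
      unfolding N_def by (auto intro: member_le_sum)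
    then show ?thesis by linarith
  qed
  have "(\<Sum>i\<in>{0..<n}. cnj (v $ i) * (\<Sum>j\<in>{0..<n}. complex_of_real (A $$ (i,j)) * v $ j))
      = (\<Sum>i\<in>{0..<n}. cnj (v $ i) * (a * v $ i))"
  proof (rule sum.cong[OF refl])
    fix i assume "i \<in> {0..<n}"
    then have "(map_mat complex_of_real A *\<^sub>v v) $ i = (a \<cdot>\<^sub>v v) $ i"
      using v(3) by simp
    then show "cnj (v $ i) * (\<Sum>j\<in>{0..<n}. complex_of_real (A $$ (i,j)) * v $ j) = cnj (v $ i) * (a * v $ i)"
      using \<open>i \<in> {0..<n}\<close> A v(1) by (simp add: scalar_prod_def)
  qed
  also have "\<dots> = a * complex_of_real N"
    unfolding N_def of_real_sum sum_distrib_left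
    by (rule sum.cong[OF refl]) (metis complex_norm_square mult.commute mult.left_commute of_real_power)
  finally have "cnj (a * complex_of_real N) = a * complex_of_real N"
    using quadratic_form_real_symmetric_real[where n=n and A=A and v=v] sym by simp
  then have "cnj a = a"
    using \<open>0 < N\<close> by simp
  then show ?thesis
    using Reals_cnj_iff complex_is_Real_iff by blast
qed

lemma proots_prod_linear: "proots (\<Prod>r\<leftarrow>rs. [:-r, 1:]) = mset (rs :: real list)"
proof (induction rs)
  case (Cons r rs)
  have "(\<Prod>r\<leftarrow>rs. [:-r, 1:]) \<noteq> (0 :: real poly)"
    by (auto simp: prod_list_zero_iff)
  then have "proots ([:-r, 1:] * (\<Prod>r\<leftarrow>rs. [:-r, 1:])) = proots [:-r, 1:] + proots (\<Prod>r\<leftarrow>rs. [:-r, 1:])"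
    by (intro proots_mult) auto
  then show ?case
    using Cons.IH by simp
qed simp

lemma power_sum_char_poly_roots:
  fixes A :: "complex mat"
  assumes A: "A \<in> carrier_mat n n" and char: "char_poly A = (\<Prod>a\<leftarrow>as. [:-a, 1:])"
  shows "sum_list (map (\<lambda>a. a^k) as) = trace_mat (A ^\<^sub>m k)"
proof -
  obtain B P Q where BPQ: "schur_decomposition A as = (B, P, Q)"
    by (cases "schur_decomposition A as") auto
  then have sim: "similar_mat_wit A B P Q" and "upper_triangular B" "diag_mat B = as"
    using schur_decomposition[OF A char BPQ] by auto
  moreover have "B \<in> carrier_mat n n"
    using similar_mat_witD2[OF A sim] by auto
  ultimately have "sum_list (map (\<lambda>a. a^k) as) = trace_mat (B ^\<^sub>m k)"
    using trace_mat_upper_triangular_pow by metis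
  also have "\<dots> = trace_mat (A ^\<^sub>m k)"
    using trace_mat_pow_similar[OF sim A] by simp
  finally show ?thesis .
qed

lemma real_symmetric_char_poly_split:
  fixes A :: "real mat"
  assumes A: "A \<in> carrier_mat n n" and sym: "\<And>i j. i < n \<Longrightarrow> j < n \<Longrightarrow> A $$ (i,j) = A $$ (j,i)"
  obtains rs where "char_poly A = (\<Prod>r\<leftarrow>rs. [:-r, 1:])" "length rs = n"
    "\<And>k. sum_list (map (\<lambda>r. r^k) rs) = trace_mat (A ^\<^sub>m k)"
proof -
  interpret map_poly_inj_comm_ring_hom "complex_of_real" ..
  define Ac where "Ac = map_mat complex_of_real A"
  have Ac: "Ac \<in> carrier_mat n n"
    using A by (simp add: Ac_def)
  obtain as where as: "char_poly Ac = (\<Prod>a\<leftarrow>as. [:-a, 1:])" "length as = n"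
    using char_poly_factorized[OF Ac] by blast
  have "Im a = 0" if "a \<in> set as" for a
  proof -
    have "poly (char_poly Ac) a = 0"
      unfolding as(1) poly_prod_list using that by (auto simp: prod_list_zero_iff)
    then show ?thesis
      using eigenvalue_root_char_poly[OF Ac] real_symmetric_eigenvalue_real[OF A sym]
      by (simp add: Ac_def)
  qed
  then obtain rs where as_rs: "as = map complex_of_real rs"
    by (metis Reals_cases complex_is_Real_iff ex_map_conv)
  have "map_poly complex_of_real (char_poly A) = char_poly Ac"
    unfolding Ac_def by (rule of_real_hom.char_poly_hom[OF A, symmetric])
  also have "\<dots> = (\<Prod>a\<leftarrow>as. [:-a, 1:])"
    by (rule as(1))
  also have "\<dots> = map_poly complex_of_real (\<Prod>r\<leftarrow>rs. [:-r, 1:])"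
    by (simp add: as_rs hom_prod_list o_def)
  finally have "map_poly complex_of_real (\<Prod>r\<leftarrow>rs. [:-r, 1:]) = map_poly complex_of_real (char_poly A)"
    by simp
  then have "char_poly A = (\<Prod>r\<leftarrow>rs. [:-r, 1:])"
    by simp
  moreover have "length rs = n"
    using as(2) by (simp add: as_rs)
  moreover have "sum_list (map (\<lambda>r. r^k) rs) = trace_mat (A ^\<^sub>m k)" for k
  proof -
    have "complex_of_real (sum_list (map (\<lambda>r. r^k) rs)) = sum_list (map (\<lambda>a. a^k) as)"
      by (simp add: as_rs of_real_hom.hom_sum_list o_def)
    also have "\<dots> = trace_mat (Ac ^\<^sub>m k)"
      by (rule power_sum_char_poly_roots[OF Ac as(1)])
    also have "Ac ^\<^sub>m k = map_mat complex_of_real (A ^\<^sub>m k)"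
      unfolding Ac_def by (rule of_real_hom.mat_hom_pow[OF A, symmetric])
    also have "trace_mat \<dots> = complex_of_real (trace_mat (A ^\<^sub>m k))"
      using A by (simp add: trace_mat_def of_real_sum)
    finally show ?thesis
      by simp
  qed
  ultimately show ?thesis
    using that by blast
qed

section \<open>Closed walks in a simple graph\<close>

lemma adj_mat_carrier: "adj_mat n E \<in> carrier_mat n n"
  by (simp add: adj_mat_def)

lemma adj_mat_index: "i < n \<Longrightarrow> j < n \<Longrightarrow> adj_mat n E $$ (i,j) = (if {i,j} \<in> E then 1 else 0)"
  by (simp add: adj_mat_def)

lemma adj_mat_sym: "i < n \<Longrightarrow> j < n \<Longrightarrow> adj_mat n E $$ (i,j) = adj_mat n E $$ (j,i)"
  by (simp add: adj_mat_index insert_commute)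

lemma adj_eigs_power_sums:
  shows "length (adj_eigs n E) = n"
    and "sorted_wrt (\<ge>) (adj_eigs n E)"
    and "sum_list (map (\<lambda>l. l^k) (adj_eigs n E)) = trace_mat (adj_mat n E ^\<^sub>m k)"
proof -
  obtain rs where cp: "char_poly (adj_mat n E) = (\<Prod>r\<leftarrow>rs. [:-r, 1:])" and "length rs = n"
    and sums: "\<And>k. sum_list (map (\<lambda>r. r^k) rs) = trace_mat (adj_mat n E ^\<^sub>m k)"
    using real_symmetric_char_poly_split[OF adj_mat_carrier adj_mat_sym] by blast
  have eigs: "adj_eigs n E = rev (sort rs)"
    unfolding adj_eigs_def cp proots_prod_linear by simp
  show "length (adj_eigs n E) = n" "sorted_wrt (\<ge>) (adj_eigs n E)"
    using \<open>length rs = n\<close> by (simp_all add: eigs sorted_wrt_rev)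
  have "mset (map (\<lambda>l. l^k) (adj_eigs n E)) = mset (map (\<lambda>l. l^k) rs)"
    by (simp add: eigs)
  then show "sum_list (map (\<lambda>l. l^k) (adj_eigs n E)) = trace_mat (adj_mat n E ^\<^sub>m k)"
    using sums by (metis sum_mset_sum_list)
qed

lemma trace_adj_mat_pow_nonneg: "0 \<le> trace_mat (adj_mat n E ^\<^sub>m p)"
proof -
  have "0 \<le> (adj_mat n E ^\<^sub>m p) $$ (i,j)" if "i < n" "j < n" for i j
    using that
  proof (induction p arbitrary: j)
    case (Suc p)
    have "adj_mat n E ^\<^sub>m p \<in> carrier_mat n n"
      using adj_mat_carrier by simp
    then show ?case
      using Suc by (auto simp: index_mult_mat_sum[OF _ adj_mat_carrier] adj_mat_index
          intro!: sum_nonneg mult_nonneg_nonneg)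
  qed (simp add: adj_mat_def)
  then show ?thesis
    unfolding trace_mat_def using adj_mat_carrier[of n E] by (auto intro: sum_nonneg)
qed

lemma simple_graph_no_loop: "simple_graph n E \<Longrightarrow> {i} \<notin> E"
  unfolding simple_graph_def by fastforce

lemma trace_adj_mat: "simple_graph n E \<Longrightarrow> trace_mat (adj_mat n E) = 0"
  using adj_mat_carrier[of n E]
  by (simp add: trace_mat_def adj_mat_index simple_graph_no_loop)

lemma sum_indicator_card: "finite S \<Longrightarrow> (\<Sum>x\<in>S. if P x then 1 else 0 :: real) = real (card {x\<in>S. P x})"
  by (simp add: sum.If_cases Int_def)

lemma card_ordered_edges:
  assumes G: "simple_graph n E"
  shows "card {(i,j). i < n \<and> j < n \<and> {i,j} \<in> E} = 2 * card E"
proof -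
  define F where "F e = {(i,j). {i,j} = e}" for e :: "nat set"
  have "{(i,j). i < n \<and> j < n \<and> {i,j} \<in> E} = (\<Union>e\<in>E. F e)"
    using G unfolding simple_graph_def F_def by auto
  moreover have card_F: "card (F e) = 2" if "e \<in> E" for e
  proof -
    have "card e = 2"
      using G \<open>e \<in> E\<close> by (simp add: simple_graph_def)
    then obtain a b where "e = {a,b}" "a \<noteq> b"
      by (meson card_2_iff)
    then have "F e = {(a,b), (b,a)}"
      by (auto simp: F_def doubleton_eq_iff)
    then show ?thesis
      using \<open>a \<noteq> b\<close> by simp
  qed
  moreover have "finite (F e)" if "e \<in> E" for e
    using card_F[OF that] by (intro card_ge_0_finite) simp
  moreover have "finite E"
    using G unfolding simple_graph_def by (auto intro: finite_subset[of E "Pow {0..<n}"])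
  ultimately have "card {(i,j). i < n \<and> j < n \<and> {i,j} \<in> E} = (\<Sum>e\<in>E. 2)"
    by (simp add: card_UN_disjoint F_def disjoint_iff)
  then show ?thesis
    by simp
qed

lemma trace_adj_mat_sq:
  assumes "simple_graph n E"
  shows "trace_mat (adj_mat n E ^\<^sub>m 2) = 2 * real (card E)"
proof -
  let ?A = "adj_mat n E"
  have A: "?A \<in> carrier_mat n n" by (rule adj_mat_carrier)
  have "?A ^\<^sub>m 2 = ?A * ?A"
    using A by (simp add: numeral_2_eq_2)
  then have "trace_mat (?A ^\<^sub>m 2) = (\<Sum>i\<in>{0..<n}. \<Sum>j\<in>{0..<n}. if {i,j} \<in> E then 1 else 0)"
    unfolding trace_mat_def using A
    by (auto simp: scalar_prod_def adj_mat_index insert_commute intro!: sum.cong)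
  also have "\<dots> = (\<Sum>p\<in>{0..<n} \<times> {0..<n}. if (case p of (i,j) \<Rightarrow> {i,j} \<in> E) then 1 else 0)"
    by (simp add: sum.cartesian_product case_prod_beta)
  also have "\<dots> = real (card {(i,j). i < n \<and> j < n \<and> {i,j} \<in> E})"
    by (subst sum_indicator_card) (auto intro!: arg_cong[where f = card])
  also have "\<dots> = 2 * real (card E)"
    using card_ordered_edges[OF assms] by simp
  finally show ?thesis .
qed

lemma card_orderings_triple:
  fixes a b c :: 'a
  assumes "a \<noteq> b" "b \<noteq> c" "a \<noteq> c"
  shows "card {(i,j,l). {i,j,l} = {a,b,c} \<and> i \<noteq> j \<and> j \<noteq> l \<and> i \<noteq> l} = 6"
proof -
  have "{(i,j,l). {i,j,l} = {a,b,c} \<and> i \<noteq> j \<and> j \<noteq> l \<and> i \<noteq> l}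
      = {(a,b,c), (a,c,b), (b,a,c), (b,c,a), (c,a,b), (c,b,a)}" (is "?L = ?R")
  proof (intro equalityI subsetI)
    fix p assume "p \<in> ?L"
    then obtain i j l where p: "p = (i,j,l)" and "{i,j,l} = {a,b,c}" "i \<noteq> j" "j \<noteq> l" "i \<noteq> l"
      by auto
    moreover from this have "i \<in> {a,b,c}" "j \<in> {a,b,c}" "l \<in> {a,b,c}"
      "a \<in> {i,j,l}" "b \<in> {i,j,l}" "c \<in> {i,j,l}"
      by blast+
    ultimately show "p \<in> ?R"
      using assms by auto
  qed (use assms in \<open>auto simp: insert_commute\<close>)
  then show ?thesis
    using assms by simp
qed

lemma card_ordered_triangles:
  assumes G: "simple_graph n E"
  shows "card {(i,j,l). i < n \<and> j < n \<and> l < n \<and> {i,j} \<in> E \<and> {j,l} \<in> E \<and> {l,i} \<in> E}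
    = 6 * triangles n E"
proof -
  define Tri where "Tri = {T. T \<subseteq> {0..<n} \<and> card T = 3 \<and> (\<forall>x\<in>T. \<forall>y\<in>T. x \<noteq> y \<longrightarrow> {x,y} \<in> E)}"
  define F where "F T = {(i,j,l). {i,j,l} = T \<and> i \<noteq> j \<and> j \<noteq> l \<and> i \<noteq> l}" for T :: "nat set"
  have "{(i,j,l). i < n \<and> j < n \<and> l < n \<and> {i,j} \<in> E \<and> {j,l} \<in> E \<and> {l,i} \<in> E} = (\<Union>T\<in>Tri. F T)"
    (is "?W = _")
  proof (intro equalityI subsetI)
    fix p assume "p \<in> ?W"
    then obtain i j l where p: "p = (i,j,l)" and "i < n" "j < n" "l < n"
      and edges: "{i,j} \<in> E" "{j,l} \<in> E" "{l,i} \<in> E"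
      by auto
    then have "i \<noteq> j" "j \<noteq> l" "i \<noteq> l"
      using simple_graph_no_loop[OF G] by auto
    then have "{i,j,l} \<in> Tri" "p \<in> F {i,j,l}"
      using \<open>i < n\<close> \<open>j < n\<close> \<open>l < n\<close> edges by (auto simp: Tri_def F_def p insert_commute)
    then show "p \<in> (\<Union>T\<in>Tri. F T)"
      by blast
  next
    fix p assume "p \<in> (\<Union>T\<in>Tri. F T)"
    then show "p \<in> ?W"
      unfolding Tri_def F_def by auto
  qed
  moreover have card_F: "card (F T) = 6" if "T \<in> Tri" for T
  proof -
    have "card T = 3"
      using \<open>T \<in> Tri\<close> by (simp add: Tri_def)
    then obtain a b c where "T = {a,b,c}" "a \<noteq> b" "b \<noteq> c" "a \<noteq> c"
      by (meson card_3_iff)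
    then show ?thesis
      unfolding F_def using card_orderings_triple by simp
  qed
  moreover have "finite Tri"
    unfolding Tri_def by (rule finite_subset[of _ "Pow {0..<n}"]) auto
  moreover have "finite (F T)" if "T \<in> Tri" for T
    using card_F[OF that] by (intro card_ge_0_finite) simp
  ultimately have "card ?W = (\<Sum>T\<in>Tri. 6)"
    by (simp add: card_UN_disjoint F_def disjoint_iff)
  then show ?thesis
    by (simp add: triangles_def Tri_def)
qed

lemma trace_adj_mat_cube:
  assumes "simple_graph n E"
  shows "trace_mat (adj_mat n E ^\<^sub>m 3) = 6 * real (triangles n E)"
proof -
  let ?A = "adj_mat n E"
  let ?P = "\<lambda>i j l. {i,j} \<in> E \<and> {j,l} \<in> E \<and> {l,i} \<in> E"
  have A: "?A \<in> carrier_mat n n" by (rule adj_mat_carrier)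
  have AA: "?A * ?A \<in> carrier_mat n n"
    using A by simp
  have "?A ^\<^sub>m 3 = ?A * ?A * ?A"
    using A by (simp add: numeral_3_eq_3)
  moreover have "(?A * ?A * ?A) $$ (i,i) = (\<Sum>j\<in>{0..<n}. \<Sum>l\<in>{0..<n}. if ?P i j l then 1 else 0)"
    if "i < n" for i
  proof -
    have "(?A * ?A * ?A) $$ (i,i) = (\<Sum>l\<in>{0..<n}. \<Sum>j\<in>{0..<n}. ?A $$ (i,j) * ?A $$ (j,l) * ?A $$ (l,i))"
      using that by (simp add: index_mult_mat_sum[OF AA A] index_mult_mat_sum[OF A A] sum_distrib_right)
    also have "\<dots> = (\<Sum>j\<in>{0..<n}. \<Sum>l\<in>{0..<n}. ?A $$ (i,j) * ?A $$ (j,l) * ?A $$ (l,i))"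
      by (rule sum.swap)
    also have "\<dots> = (\<Sum>j\<in>{0..<n}. \<Sum>l\<in>{0..<n}. if ?P i j l then 1 else 0)"
      using that by (intro sum.cong refl) (auto simp: adj_mat_index)
    finally show ?thesis .
  qed
  ultimately have "trace_mat (?A ^\<^sub>m 3) = (\<Sum>i\<in>{0..<n}. \<Sum>j\<in>{0..<n}. \<Sum>l\<in>{0..<n}. if ?P i j l then 1 else 0)"
    unfolding trace_mat_def using A by simp
  also have "\<dots> = (\<Sum>p\<in>{0..<n} \<times> {0..<n} \<times> {0..<n}. if (case p of (i,j,l) \<Rightarrow> ?P i j l) then 1 else 0)"
    by (simp add: sum.cartesian_product case_prod_beta)
  also have "\<dots> = real (card {(i,j,l). i < n \<and> j < n \<and> l < n \<and> ?P i j l})"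
    by (subst sum_indicator_card) (auto intro!: arg_cong[where f = card])
  also have "\<dots> = 6 * real (triangles n E)"
    using card_ordered_triangles[OF assms] by simp
  finally show ?thesis .
qed

lemma simple_graph_two_edges_imp_three_vertices:
  assumes G: "simple_graph n E" and "2 \<le> card E"
  shows "3 \<le> n"
proof (rule ccontr)
  assume "\<not> 3 \<le> n"
  have "E \<subseteq> {{0..<n}}"
  proof
    fix e assume "e \<in> E"
    then have "e \<subseteq> {0..<n}" "card e = 2"
      using G unfolding simple_graph_def by auto
    moreover from this have "card {0..<n} \<le> card e"
      using \<open>\<not> 3 \<le> n\<close> by simp
    ultimately show "e \<in> {{0..<n}}"
      using card_seteq[of "{0..<n}" e] by auto
  qed
  then have "card E \<le> 1"
    using card_mono[of "{{0..<n}}" E] by simp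
  then show False
    using \<open>2 \<le> card E\<close> by simp
qed

theorem theorem3p1:
  fixes n :: nat and E :: "nat set set"
  assumes "simple_graph n E" and "card E \<ge> 2"
  shows "(lambda1 n E)^2 + (lambda2 n E)^2 \<le> real (card E) + (3 * real (triangles n E)) powr (2/3)
       \<and> (triangles n E > 0 \<longrightarrow>
         (lambda1 n E)^2 + (lambda2 n E)^2 < real (card E) + (3 * real (triangles n E)) powr (2/3))"
proof -
  let ?L = "adj_eigs n E" and ?t = "real (triangles n E)"
  have power_sum: "sum_list (map (\<lambda>l. l^k) ?L) = trace_mat (adj_mat n E ^\<^sub>m k)" for k
    by (rule adj_eigs_power_sums)
  have "sum_list ?L = 0"
    using power_sum[of 1] trace_adj_mat[OF assms(1)] adj_mat_carrier[of n E] by simp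
  moreover have "sum_list (map (\<lambda>l. l^2) ?L) = 2 * real (card E)"
    using power_sum[of 2] trace_adj_mat_sq[OF assms(1)] by simp
  moreover have "sum_list (map (\<lambda>l. l^3) ?L) = 6 * ?t"
    using power_sum[of 3] trace_adj_mat_cube[OF assms(1)] by simp
  moreover have "3 \<le> length ?L"
    using simple_graph_two_edges_imp_three_vertices[OF assms] adj_eigs_power_sums(1) by simp
  ultimately have "2 * (?L!0^2 + ?L!1^2) \<le> 2 * real (card E) + 2 * pow23 (3 * ?t)"
    "0 < ?t \<Longrightarrow> 2 * (?L!0^2 + ?L!1^2) < 2 * real (card E) + 2 * pow23 (3 * ?t)"
    using sorted_top_two_squares_bound[OF adj_eigs_power_sums(2), of n E]
      power_sum trace_adj_mat_pow_nonneg assms(2)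
    by simp_all
  then show ?thesis
    by (auto simp: lambda1_def lambda2_def pow23_def)
qed

end
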